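(* Let $X$ be a separable infinite-dimensional Banach space and $T_1,\dots,T_N\in B(X)$ with $N\ge2$. Suppose there exist an increasing sequence $(n_k)$ of positive integers, a dense set $X_0\subset X$ and maps $S_k:X_0\to X$ such that (i) $T_i^{n_k}x\to0$ as $k\to\infty$ for every $x\in X_0$ and $1\le i\le N$; and (ii) for each $\epsilon>0$, $K\in\mathbb{N}$ and $x_0\in X_0$ there exists $k\ge K$ with $\|S_k(x_0)\|<\epsilon$ and $\|T_i^{n_k}S_k(x_0)-x_0\|<\epsilon$ for all $1\le i\le N$. Then $T_1,\dots,T_N$ satisfy the Simultaneous Blow-up/Collapse Property, and hence are densely s-hypercyclic.
   Context: $T_1,\dots,T_N$ satisfy the Simultaneous Blow-up/Collapse Property if for all non-empty open $W,U,V\subset X$ with $0\in W$ there is $n\in\mathbb{N}$ with $W\cap T_1^{-n}(U)\cap\cdots\cap T_N^{-n}(U)\ne\emptyset$ and $V\cap T_1^{-n}(W)\cap\cdots\cap T_N^{-n}(W)\ne\emptyset$. A vector $x$ is s-hypercyclic for $T_1,\dots,T_N$ if the closure of $\{(T_1^nx,\dots,T_N^nx):n\in\mathbb{N}\}$ in $\oplus_{i=1}^NX$ contains the diagonal $\{(y,\dots,y):y\in X\}$; the operators are densely s-hypercyclic if the set of s-hypercyclic vectors is dense in $X$. *)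

theory Defs
  imports "HOL-Analysis.Analysis"
begin

definition separable_space :: "'a::metric_space itself \<Rightarrow> bool" where
  "separable_space _ \<longleftrightarrow> (\<exists>D::'a set. countable D \<and> closure D = UNIV)"

definition infinite_dimensional :: "'a::real_vector itself \<Rightarrow> bool" where
  "infinite_dimensional _ \<longleftrightarrow> (\<forall>B::'a set. finite B \<longrightarrow> span B \<noteq> UNIV)"

definition SBCP :: "(nat \<Rightarrow> 'a::real_normed_vector \<Rightarrow> 'a) \<Rightarrow> nat \<Rightarrow> bool" where
  "SBCP T N \<longleftrightarrow>
    (\<forall>W U V. open W \<and> open U \<and> open V \<and> W \<noteq> {} \<and> U \<noteq> {} \<and> V \<noteq> {} \<and> 0 \<in> W \<longrightarrow>
      (\<exists>n\<ge>1. W \<inter> (\<Inter>i\<in>{1..N}. (T i ^^ n) -` U) \<noteq> {} \<and>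
              V \<inter> (\<Inter>i\<in>{1..N}. (T i ^^ n) -` W) \<noteq> {}))"

text \<open>x is s-hypercyclic: the diagonal lies in the closure (in the finite product
  space X^N) of the orbit (T_1^n x, ..., T_N^n x), n \<ge> 1; membership in the closure
  of a subset of the finite product is written out coordinatewise.\<close>
definition s_hypercyclic :: "(nat \<Rightarrow> 'a::real_normed_vector \<Rightarrow> 'a) \<Rightarrow> nat \<Rightarrow> 'a \<Rightarrow> bool" where
  "s_hypercyclic T N x \<longleftrightarrow>
    (\<forall>y e. e > 0 \<longrightarrow> (\<exists>n\<ge>1. \<forall>i\<in>{1..N}. dist ((T i ^^ n) x) y < e))"

definition densely_s_hypercyclic :: "(nat \<Rightarrow> 'a::real_normed_vector \<Rightarrow> 'a) \<Rightarrow> nat \<Rightarrow> bool" where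
  "densely_s_hypercyclic T N \<longleftrightarrow> closure {x. s_hypercyclic T N x} = UNIV"

end

theory Submission
  imports Defs
begin

text \<open>The criterion gives the Blow-up/Collapse Property directly: for \<open>u \<in> U \<inter> X0\<close> and
  \<open>v \<in> V \<inter> X0\<close>, a large index \<open>k\<close> makes \<open>S k u\<close> a small vector that all \<open>T i ^^ n k\<close>
  send close to \<open>u\<close>, while they send \<open>v\<close> close to \<open>0\<close>. By linearity the property yields
  s-topological transitivity: the sum \<open>v + w\<close> of a vector \<open>v\<close> collapsing into a small
  ball \<open>W\<close> around \<open>0\<close> and a vector \<open>w \<in> W\<close> blowing up into \<open>U\<close> stays near \<open>v\<close> and is
  mapped near \<open>U\<close>. Finally, in a separable Banach space the s-hypercyclic vectors form
  the intersection of countably many open sets, one for each ball of a countable base,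
  each dense by transitivity, so Baire's theorem makes them dense.\<close>

definition s_topologically_transitive :: "(nat \<Rightarrow> 'a::topological_space \<Rightarrow> 'a) \<Rightarrow> nat \<Rightarrow> bool" where
  "s_topologically_transitive T N \<longleftrightarrow>
    (\<forall>U V. open U \<and> open V \<and> U \<noteq> {} \<and> V \<noteq> {} \<longrightarrow>
      (\<exists>m\<ge>1. V \<inter> (\<Inter>i\<in>{1..N}. (T i ^^ m) -` U) \<noteq> {}))"

lemma dense_iff_intersects_open:
  "closure A = UNIV \<longleftrightarrow> (\<forall>V. open V \<and> V \<noteq> {} \<longrightarrow> A \<inter> V \<noteq> {})"
  using dense_intersects_open[of euclidean A] by simp

lemma linear_funpow: "linear (f :: 'a::real_vector \<Rightarrow> 'a) \<Longrightarrow> linear (f ^^ m)"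
  by (induction m) (simp_all add: linear_compose linear_ident[folded id_def])

lemma continuous_on_funpow:
  "continuous_on UNIV (f :: 'a::topological_space \<Rightarrow> 'a) \<Longrightarrow> continuous_on UNIV (f ^^ m)"
  by (induction m) (simp_all add: continuous_on_compose2)

lemma SBCP_criterion:
  fixes T :: "nat \<Rightarrow> 'a::real_normed_vector \<Rightarrow> 'a"
  assumes pos: "\<And>k. n k > 0"
    and dense: "closure X0 = UNIV"
    and collapse: "\<And>x i. x \<in> X0 \<Longrightarrow> i \<in> {1..N} \<Longrightarrow> ((\<lambda>k. (T i ^^ n k) x) \<longlongrightarrow> 0) sequentially"
    and blow_up: "\<And>e K x0. e > 0 \<Longrightarrow> x0 \<in> X0 \<Longrightarrow>
           \<exists>k\<ge>K. norm (S k x0) < e \<and> (\<forall>i\<in>{1..N}. norm ((T i ^^ n k) (S k x0) - x0) < e)"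
  shows "SBCP T N"
  unfolding SBCP_def
proof (intro allI impI)
  fix W U V :: "'a set"
  assume "open W \<and> open U \<and> open V \<and> W \<noteq> {} \<and> U \<noteq> {} \<and> V \<noteq> {} \<and> 0 \<in> W"
  then have opens: "open W" "open U" "open V" and "U \<noteq> {}" "V \<noteq> {}" "0 \<in> W" by auto
  obtain u where u: "u \<in> U" "u \<in> X0"
    using dense \<open>U \<noteq> {}\<close> opens(2) by (auto simp: dense_iff_intersects_open)
  obtain v where v: "v \<in> V" "v \<in> X0"
    using dense \<open>V \<noteq> {}\<close> opens(3) by (auto simp: dense_iff_intersects_open)
  obtain r where r: "r > 0" "ball 0 r \<subseteq> W" using opens(1) \<open>0 \<in> W\<close> open_contains_ball by blast
  obtain s where s: "s > 0" "ball u s \<subseteq> U" using opens(2) u(1) open_contains_ball by blast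
  have "\<forall>\<^sub>F k in sequentially. \<forall>i\<in>{1..N}. dist ((T i ^^ n k) v) 0 < r"
    by (intro eventually_ball_finite ballI tendstoD[OF collapse[OF v(2)]] r(1)) auto
  then obtain K where K: "\<And>k i. k \<ge> K \<Longrightarrow> i \<in> {1..N} \<Longrightarrow> (T i ^^ n k) v \<in> ball 0 r"
    unfolding eventually_sequentially by (metis mem_ball dist_commute)
  obtain k where k: "k \<ge> K" "norm (S k u) < r"
    "\<And>i. i \<in> {1..N} \<Longrightarrow> norm ((T i ^^ n k) (S k u) - u) < s"
    using blow_up[of "min r s" u K] r s u by auto
  have "S k u \<in> W \<inter> (\<Inter>i\<in>{1..N}. (T i ^^ n k) -` U)"
    using k(2,3) r(2) s(2) by (force simp: dist_norm norm_minus_commute)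
  moreover have "v \<in> V \<inter> (\<Inter>i\<in>{1..N}. (T i ^^ n k) -` W)"
    using v K[OF k(1)] r(2) by blast
  ultimately show "\<exists>m\<ge>1. W \<inter> (\<Inter>i\<in>{1..N}. (T i ^^ m) -` U) \<noteq> {} \<and>
      V \<inter> (\<Inter>i\<in>{1..N}. (T i ^^ m) -` W) \<noteq> {}"
    using pos[of k] by (intro exI[of _ "n k"]) auto
qed

lemma s_topologically_transitive_if_SBCP:
  fixes T :: "nat \<Rightarrow> 'a::real_normed_vector \<Rightarrow> 'a"
  assumes sbcp: "SBCP T N" and linear: "\<And>i. i \<in> {1..N} \<Longrightarrow> linear (T i)"
  shows "s_topologically_transitive T N"
  unfolding s_topologically_transitive_def
proof (intro allI impI)
  fix U V :: "'a set"
  assume "open U \<and> open V \<and> U \<noteq> {} \<and> V \<noteq> {}"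
  then obtain y v0 where "open U" "open V" "y \<in> U" "v0 \<in> V" by blast
  then obtain e d where e: "e > 0" "ball y e \<subseteq> U" and d: "d > 0" "ball v0 d \<subseteq> V"
    using open_contains_ball by metis
  define r where "r = min e d / 2"
  have r: "r > 0" "2 * r \<le> e" "2 * r \<le> d" using e(1) d(1) by (auto simp: r_def)
  have "\<exists>m\<ge>1. ball 0 r \<inter> (\<Inter>i\<in>{1..N}. (T i ^^ m) -` ball y r) \<noteq> {} \<and>
      ball v0 r \<inter> (\<Inter>i\<in>{1..N}. (T i ^^ m) -` ball 0 r) \<noteq> {}"
    by (rule sbcp[unfolded SBCP_def, rule_format]) (use r(1) in auto)
  then obtain m w v where m: "m \<ge> 1"
    and w: "norm w < r" "\<And>i. i \<in> {1..N} \<Longrightarrow> dist y ((T i ^^ m) w) < r"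
    and v: "dist v0 v < r" "\<And>i. i \<in> {1..N} \<Longrightarrow> norm ((T i ^^ m) v) < r"
    by (auto simp: ex_in_conv[symmetric])
  have "v + w \<in> V"
  proof -
    have "dist v0 (v + w) \<le> dist v0 v + norm w"
      by (metis add_diff_cancel_left' dist_norm dist_triangle norm_minus_commute)
    then show ?thesis using v(1) w(1) r(3) d(2) by auto
  qed
  moreover have "(T i ^^ m) (v + w) \<in> U" if i: "i \<in> {1..N}" for i
  proof -
    have "(T i ^^ m) (v + w) = (T i ^^ m) v + (T i ^^ m) w"
      using linear_funpow[OF linear[OF i]] by (simp add: linear_add)
    moreover have
      "dist y ((T i ^^ m) v + (T i ^^ m) w) \<le> norm ((T i ^^ m) v) + dist y ((T i ^^ m) w)"
      by (metis add.commute add_diff_cancel_left' dist_norm dist_triangle norm_minus_commute)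
    ultimately show ?thesis using v(2)[OF i] w(2)[OF i] r(2) e(2) by auto
  qed
  ultimately show "\<exists>m\<ge>1. V \<inter> (\<Inter>i\<in>{1..N}. (T i ^^ m) -` U) \<noteq> {}"
    using m by blast
qed

lemma densely_s_hypercyclic_if_s_topologically_transitive:
  fixes T :: "nat \<Rightarrow> 'a::banach \<Rightarrow> 'a"
  assumes "separable_space TYPE('a)"
    and continuous: "\<And>i. i \<in> {1..N} \<Longrightarrow> continuous_on UNIV (T i)"
    and transitive: "s_topologically_transitive T N"
  shows "densely_s_hypercyclic T N"
proof -
  obtain D :: "'a set" where D: "countable D" "closure D = UNIV"
    using assms(1) unfolding separable_space_def by blast
  define hits :: "'a set \<Rightarrow> 'a set" where
    "hits U = (\<Union>m\<in>{1..}. \<Inter>i\<in>{1..N}. (T i ^^ m) -` U)" for U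
  define balls where "balls = (\<lambda>(d, k). ball d (1 / Suc k)) ` (D \<times> (UNIV :: nat set))"
  have "open (hits U)" if "open U" for U
    unfolding hits_def using continuous_on_funpow[OF continuous] that
    by (intro open_UN open_INT ballI) (auto simp: open_vimage)
  moreover have "closure (hits U) = UNIV" if "open U" "U \<noteq> {}" for U
    unfolding dense_iff_intersects_open
  proof (intro allI impI)
    fix V :: "'a set"
    assume "open V \<and> V \<noteq> {}"
    then have "\<exists>m\<ge>1. V \<inter> (\<Inter>i\<in>{1..N}. (T i ^^ m) -` U) \<noteq> {}"
      by (intro transitive[unfolded s_topologically_transitive_def, rule_format]) (use that in auto)
    then obtain m where "m \<ge> 1" "V \<inter> (\<Inter>i\<in>{1..N}. (T i ^^ m) -` U) \<noteq> {}"
      by blast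
    then show "hits U \<inter> V \<noteq> {}" unfolding hits_def by blast
  qed
  moreover have "open U" "U \<noteq> {}" if "U \<in> balls" for U
    using that by (auto simp: balls_def)
  ultimately have "openin euclidean U \<and> euclidean closure_of U = topspace euclidean"
    if "U \<in> hits ` balls" for U
    using that by auto
  moreover have "countable (hits ` balls)"
    using D(1) by (simp add: balls_def)
  ultimately have "closure (\<Inter>(hits ` balls)) = UNIV"
    using Baire_category[of euclidean "hits ` balls"]
    by (simp add: completely_metrizable_space_euclidean)
  moreover have "\<Inter>(hits ` balls) \<subseteq> {x. s_hypercyclic T N x}"
  proof (clarsimp simp: s_hypercyclic_def)
    fix x y and e :: real
    assume x: "\<forall>U\<in>balls. x \<in> hits U" and "e > 0"
    obtain d where d: "d \<in> D" "dist d y < e / 2"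
      using D(2) closure_approachable[of y D] \<open>e > 0\<close> by (metis UNIV_I half_gt_zero)
    obtain k :: nat where k: "1 / Suc k < e / 2"
      using reals_Archimedean[of "e / 2"] \<open>e > 0\<close> by (auto simp: inverse_eq_divide)
    have "ball d (1 / Suc k) \<in> balls" using d(1) by (auto simp: balls_def)
    with x obtain m where m: "m \<ge> 1"
      and close: "\<And>i. i \<in> {1..N} \<Longrightarrow> dist d ((T i ^^ m) x) < 1 / Suc k"
      by (auto simp: hits_def)
    have "dist ((T i ^^ m) x) y < e" if "i \<in> {1..N}" for i
      using dist_triangle3[of "(T i ^^ m) x" y d] close[OF that] d(2) k by linarith
    then show "\<exists>m\<ge>Suc 0. \<forall>i\<in>{Suc 0..N}. dist ((T i ^^ m) x) y < e"
      using m by auto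
  qed
  ultimately show ?thesis
    unfolding densely_s_hypercyclic_def by (metis closure_mono top.extremum_unique)
qed

theorem theorem3p1:
  fixes T :: "nat \<Rightarrow> 'a::banach \<Rightarrow> 'a"
    and N :: nat
    and n :: "nat \<Rightarrow> nat"
    and X0 :: "'a set"
    and S :: "nat \<Rightarrow> 'a \<Rightarrow> 'a"
  assumes "separable_space TYPE('a)"
    and "infinite_dimensional TYPE('a)"
    and "N \<ge> 2"
    and "\<And>i. i \<in> {1..N} \<Longrightarrow> bounded_linear (T i)"
    and "strict_mono n" and "\<And>k. n k > 0"
    and "closure X0 = UNIV"
    and "\<And>x i. x \<in> X0 \<Longrightarrow> i \<in> {1..N} \<Longrightarrow> ((\<lambda>k. (T i ^^ n k) x) \<longlongrightarrow> 0) sequentially"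
    and "\<And>e K x0. e > 0 \<Longrightarrow> x0 \<in> X0 \<Longrightarrow>
           \<exists>k\<ge>K. norm (S k x0) < e \<and> (\<forall>i\<in>{1..N}. norm ((T i ^^ n k) (S k x0) - x0) < e)"
  shows "SBCP T N \<and> densely_s_hypercyclic T N"
proof
  show sbcp: "SBCP T N"
    using assms(6-9) by (rule SBCP_criterion)
  have "s_topologically_transitive T N"
    using sbcp by (rule s_topologically_transitive_if_SBCP)
      (use assms(4) bounded_linear.linear in auto)
  then show "densely_s_hypercyclic T N"
    using assms(4) linear_continuous_on
    by (intro densely_s_hypercyclic_if_s_topologically_transitive[OF assms(1)]) auto
qed

end
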